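(* Let $\tau\in(0,\infty]$ and let $\{(\mathbf{x}_i,\mathbf{v}_i)\}_{i=1}^N$ be a solution on $[0,\tau)$ of the Cucker–Smale model with bonding force $$\dot{\mathbf{x}}_i=\mathbf{v}_i,\qquad \dot{\mathbf{v}}_i=\frac{\kappa_0}{N}\sum_{j=1}^N\psi(\|\mathbf{x}_j-\mathbf{x}_i\|)(\mathbf{v}_j-\mathbf{v}_i)+\frac{\kappa_1}{N}\sum_{j\ne i}\Big\langle\mathbf{v}_j-\mathbf{v}_i,\frac{\mathbf{x}_j-\mathbf{x}_i}{\|\mathbf{x}_j-\mathbf{x}_i\|}\Big\rangle\frac{\mathbf{x}_j-\mathbf{x}_i}{\|\mathbf{x}_j-\mathbf{x}_i\|}+\frac{\kappa_2}{N}\sum_{j\ne i}\big(\|\mathbf{x}_j-\mathbf{x}_i\|-d^\infty_{ij}\big)\frac{\mathbf{x}_j-\mathbf{x}_i}{\|\mathbf{x}_j-\mathbf{x}_i\|}.$$ Then for all $t\in[0,\tau)$, $E(t)+\int_0^tP(s)\,ds=E(0)$, where $$P:=\frac{\kappa_0}{2N}\sum_{i,j=1}^N\psi(\|\mathbf{x}_j-\mathbf{x}_i\|)\|\mathbf{v}_j-\mathbf{v}_i\|^2+\frac{\kappa_1}{2N}\sum_{i\ne j}\Big\langle\mathbf{v}_j-\mathbf{v}_i,\frac{\mathbf{x}_j-\mathbf{x}_i}{\|\mathbf{x}_j-\mathbf{x}_i\|}\Big\rangle^2.$$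
   Context: $N\ge 2$, $d\ge1$, $[N]=\{1,\dots,N\}$; Euclidean norm and inner product on $\mathbb{R}^d$; $\kappa_0,\kappa_1,\kappa_2\ge 0$; $[d^\infty_{ij}]$ real symmetric with zero diagonal; $\psi:[0,\infty)\to[0,\infty)$ bounded and locally Lipschitz. A solution is a $C^1$ family with $\mathbf{x}_i(t)\ne\mathbf{x}_j(t)$ for $i\ne j$ satisfying the system. The total energy is $E:=\frac12\sum_{i=1}^N\|\mathbf{v}_i\|^2+\frac{\kappa_2}{4N}\sum_{i,j=1}^N\big(\|\mathbf{x}_j-\mathbf{x}_i\|-d^\infty_{ij}\big)^2$. *)

theory Defs
  imports "HOL-Analysis.Analysis" "HOL-Library.Extended_Real"
begin

definition unitdir :: "'a::euclidean_space \<Rightarrow> 'a \<Rightarrow> 'a" where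
  "unitdir xi xj = (1 / norm (xj - xi)) *\<^sub>R (xj - xi)"

definition cs_rhs ::
  "nat \<Rightarrow> real \<Rightarrow> real \<Rightarrow> real \<Rightarrow> (real \<Rightarrow> real) \<Rightarrow> (nat \<Rightarrow> nat \<Rightarrow> real)
   \<Rightarrow> (nat \<Rightarrow> 'a::euclidean_space) \<Rightarrow> (nat \<Rightarrow> 'a) \<Rightarrow> nat \<Rightarrow> 'a" where
  "cs_rhs N k0 k1 k2 \<psi> dinf x v i =
     (k0 / real N) *\<^sub>R (\<Sum>j\<in>{1..N}. \<psi> (norm (x j - x i)) *\<^sub>R (v j - v i))
   + (k1 / real N) *\<^sub>R (\<Sum>j\<in>{1..N} - {i}.
        inner (v j - v i) (unitdir (x i) (x j)) *\<^sub>R unitdir (x i) (x j))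
   + (k2 / real N) *\<^sub>R (\<Sum>j\<in>{1..N} - {i}.
        (norm (x j - x i) - dinf i j) *\<^sub>R unitdir (x i) (x j))"

definition total_energy ::
  "nat \<Rightarrow> real \<Rightarrow> (nat \<Rightarrow> nat \<Rightarrow> real) \<Rightarrow> (nat \<Rightarrow> 'a::euclidean_space) \<Rightarrow> (nat \<Rightarrow> 'a) \<Rightarrow> real" where
  "total_energy N k2 dinf x v =
     (1/2) * (\<Sum>i\<in>{1..N}. (norm (v i))\<^sup>2)
   + (k2 / (4 * real N)) * (\<Sum>i\<in>{1..N}. \<Sum>j\<in>{1..N}. (norm (x j - x i) - dinf i j)\<^sup>2)"

definition dissipation ::
  "nat \<Rightarrow> real \<Rightarrow> real \<Rightarrow> (real \<Rightarrow> real) \<Rightarrow> (nat \<Rightarrow> 'a::euclidean_space) \<Rightarrow> (nat \<Rightarrow> 'a) \<Rightarrow> real" where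
  "dissipation N k0 k1 \<psi> x v =
     (k0 / (2 * real N)) * (\<Sum>i\<in>{1..N}. \<Sum>j\<in>{1..N}. \<psi> (norm (x j - x i)) * (norm (v j - v i))\<^sup>2)
   + (k1 / (2 * real N)) * (\<Sum>i\<in>{1..N}. \<Sum>j\<in>{1..N} - {i}. (inner (v j - v i) (unitdir (x i) (x j)))\<^sup>2)"

definition locally_lipschitz_nonneg :: "(real \<Rightarrow> real) \<Rightarrow> bool" where
  "locally_lipschitz_nonneg \<psi> \<longleftrightarrow>
     (\<forall>r\<ge>0. \<exists>e>0. \<exists>L. L-lipschitz_on (cball r e \<inter> {0..}) \<psi>)"

end

theory Submission
  imports Defs
begin

text \<open>The energy is differentiable along a collision-free solution, with
  \<open>dE/dt = \<Sum>\<^sub>i \<langle>v\<^sub>i, dv\<^sub>i/dt\<rangle> + (\<kappa>\<^sub>2/2N) \<Sum>\<^sub>i\<^sub>j r\<^sub>i\<^sub>j \<langle>v\<^sub>j - v\<^sub>i, u\<^sub>i\<^sub>j\<rangle>\<close>,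
  where \<open>r\<^sub>i\<^sub>j = \<parallel>x\<^sub>j - x\<^sub>i\<parallel> - d\<^sup>\<infinity>\<^sub>i\<^sub>j\<close> and \<open>u\<^sub>i\<^sub>j\<close> is the unit vector from \<open>x\<^sub>i\<close> to \<open>x\<^sub>j\<close>.
  Inserting the equation of motion, each of the three interaction sums has the form
  \<open>\<Sum>\<^sub>i\<^sub>j c\<^sub>i\<^sub>j \<langle>v\<^sub>i, w\<^sub>i\<^sub>j\<rangle>\<close> with \<open>c\<close> symmetric and \<open>w\<close> antisymmetric, which equals
  \<open>-\<onehalf> \<Sum>\<^sub>i\<^sub>j c\<^sub>i\<^sub>j \<langle>v\<^sub>j - v\<^sub>i, w\<^sub>i\<^sub>j\<rangle>\<close>. The alignment sums become \<open>-P\<close>, and the bonding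
  sum cancels the potential part of \<open>dE/dt\<close>, so \<open>dE/dt = -P\<close>; the fundamental theorem
  of calculus concludes.\<close>

lemma unitdir_minus_commute: "unitdir y x = - unitdir x (y::'a::euclidean_space)"
  unfolding unitdir_def by (simp add: norm_minus_commute scaleR_right_diff_distrib)

lemma unitdir_self [simp]: "unitdir x x = 0"
  unfolding unitdir_def by simp

lemma double_sum_symmetrize:
  fixes f :: "'i \<Rightarrow> 'i \<Rightarrow> 'b::comm_semiring_1"
  shows "(\<Sum>i\<in>A. \<Sum>j\<in>A. f i j + f j i) = 2 * (\<Sum>i\<in>A. \<Sum>j\<in>A. f i j)"
  by (simp add: sum.distrib sum.swap[of "\<lambda>i j. f j i"] mult_2)

lemma double_sum_inner_antisym:
  fixes c :: "'i \<Rightarrow> 'i \<Rightarrow> real" and w :: "'i \<Rightarrow> 'i \<Rightarrow> 'a::real_inner" and v :: "'i \<Rightarrow> 'a"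
  assumes c_sym: "\<And>i j. i \<in> A \<Longrightarrow> j \<in> A \<Longrightarrow> c j i = c i j"
    and w_antisym: "\<And>i j. i \<in> A \<Longrightarrow> j \<in> A \<Longrightarrow> w j i = - w i j"
  shows "(\<Sum>i\<in>A. \<Sum>j\<in>A. c i j * inner (v i) (w i j))
       = - (1/2) * (\<Sum>i\<in>A. \<Sum>j\<in>A. c i j * inner (v j - v i) (w i j))"
proof -
  have pair: "c i j * inner (v j - v i) (w i j) = - (c i j * inner (v i) (w i j) + c j i * inner (v j) (w j i))"
    if "i \<in> A" "j \<in> A" for i j
    using c_sym[OF that(2,1)] w_antisym[OF that(2,1)] by (simp add: algebra_simps)
  have "(\<Sum>i\<in>A. \<Sum>j\<in>A. c i j * inner (v j - v i) (w i j))
      = (\<Sum>i\<in>A. \<Sum>j\<in>A. - (c i j * inner (v i) (w i j) + c j i * inner (v j) (w j i)))"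
    by (intro sum.cong refl) (erule (1) pair)
  also have "\<dots> = - (2 * (\<Sum>i\<in>A. \<Sum>j\<in>A. c i j * inner (v i) (w i j)))"
    by (simp only: sum_negf double_sum_symmetrize)
  finally show ?thesis
    by simp
qed

lemma sum_inner_cs_rhs:
  fixes X V :: "nat \<Rightarrow> 'a::euclidean_space"
  assumes dsym: "\<forall>i\<in>{1..N}. \<forall>j\<in>{1..N}. dinf i j = dinf j i"
  shows "(\<Sum>i\<in>{1..N}. inner (V i) (cs_rhs N \<kappa>\<^sub>0 \<kappa>\<^sub>1 \<kappa>\<^sub>2 \<psi> dinf X V i))
       = - dissipation N \<kappa>\<^sub>0 \<kappa>\<^sub>1 \<psi> X V
         - (\<kappa>\<^sub>2 / (2 * real N)) * (\<Sum>i\<in>{1..N}. \<Sum>j\<in>{1..N}.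
              (norm (X j - X i) - dinf i j) * inner (V j - V i) (unitdir (X i) (X j)))"
proof -
  let ?A = "{1..N}"
  let ?u = "\<lambda>i j. unitdir (X i) (X j)"
  let ?D = "\<lambda>i j. inner (V j - V i) (?u i j)"
  let ?r = "\<lambda>i j. norm (X j - X i) - dinf i j"
  have u_antisym: "?u j i = - ?u i j" for i j
    by (rule unitdir_minus_commute)
  have D_sym: "?D j i = ?D i j" for i j
    unfolding u_antisym[of i j] by (simp add: inner_diff_left)
  have r_sym: "?r j i = ?r i j" if "i \<in> ?A" "j \<in> ?A" for i j
    using dsym that by (simp add: norm_minus_commute[of "X i"])
  have expand: "(\<Sum>i\<in>?A. inner (V i) (cs_rhs N \<kappa>\<^sub>0 \<kappa>\<^sub>1 \<kappa>\<^sub>2 \<psi> dinf X V i))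
      = (\<kappa>\<^sub>0 / real N) * (\<Sum>i\<in>?A. \<Sum>j\<in>?A. \<psi> (norm (X j - X i)) * inner (V i) (V j - V i))
      + (\<kappa>\<^sub>1 / real N) * (\<Sum>i\<in>?A. \<Sum>j\<in>?A. ?D i j * inner (V i) (?u i j))
      + (\<kappa>\<^sub>2 / real N) * (\<Sum>i\<in>?A. \<Sum>j\<in>?A. ?r i j * inner (V i) (?u i j))"
    unfolding cs_rhs_def
    by (simp add: inner_add_right inner_sum_right sum.distrib sum_distrib_left sum_diff1)
  have alignment: "(\<Sum>i\<in>?A. \<Sum>j\<in>?A. \<psi> (norm (X j - X i)) * inner (V i) (V j - V i))
      = - (1/2) * (\<Sum>i\<in>?A. \<Sum>j\<in>?A. \<psi> (norm (X j - X i)) * (norm (V j - V i))\<^sup>2)"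
  proof -
    have "\<psi> (norm (X i - X j)) = \<psi> (norm (X j - X i))" for i j
      by (metis norm_minus_commute)
    from double_sum_inner_antisym[of ?A "\<lambda>i j. \<psi> (norm (X j - X i))" "\<lambda>i j. V j - V i" V, OF this]
    show ?thesis
      by (simp add: power2_norm_eq_inner)
  qed
  have projection: "(\<Sum>i\<in>?A. \<Sum>j\<in>?A. ?D i j * inner (V i) (?u i j))
      = - (1/2) * (\<Sum>i\<in>?A. \<Sum>j\<in>?A. (?D i j)\<^sup>2)"
    using double_sum_inner_antisym[of ?A ?D ?u V, OF D_sym u_antisym]
    by (simp add: power2_eq_square)
  have bonding: "(\<Sum>i\<in>?A. \<Sum>j\<in>?A. ?r i j * inner (V i) (?u i j))
      = - (1/2) * (\<Sum>i\<in>?A. \<Sum>j\<in>?A. ?r i j * ?D i j)"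
    by (rule double_sum_inner_antisym[of ?A ?r ?u V, OF r_sym u_antisym])
  have dissipation: "dissipation N \<kappa>\<^sub>0 \<kappa>\<^sub>1 \<psi> X V
      = (\<kappa>\<^sub>0 / (2 * real N)) * (\<Sum>i\<in>?A. \<Sum>j\<in>?A. \<psi> (norm (X j - X i)) * (norm (V j - V i))\<^sup>2)
      + (\<kappa>\<^sub>1 / (2 * real N)) * (\<Sum>i\<in>?A. \<Sum>j\<in>?A. (?D i j)\<^sup>2)"
    unfolding dissipation_def by (simp add: sum_diff1)
  show ?thesis
    unfolding expand alignment projection bonding dissipation by (simp add: field_simps)
qed

lemma norm_diff_has_real_derivative:
  fixes x y :: "real \<Rightarrow> 'a::euclidean_space"
  assumes "(x has_vector_derivative x') (at t within S)" "(y has_vector_derivative y') (at t within S)"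
    and "x t \<noteq> y t"
  shows "((\<lambda>s. norm (y s - x s)) has_real_derivative inner (y' - x') (unitdir (x t) (y t))) (at t within S)"
proof -
  have "((\<lambda>s. y s - x s) has_derivative (\<lambda>h. h *\<^sub>R (y' - x'))) (at t within S)"
    using has_vector_derivative_diff[OF assms(2,1)] by (simp add: has_vector_derivative_def)
  from has_derivative_compose[OF this has_derivative_norm] \<open>x t \<noteq> y t\<close>
  have "((\<lambda>s. norm (y s - x s)) has_derivative (\<lambda>h. (h *\<^sub>R (y' - x')) \<bullet> sgn (y t - x t))) (at t within S)"
    by simp
  then show ?thesis
    unfolding has_field_derivative_def
    by (rule has_derivative_eq_rhs) (simp add: fun_eq_iff unitdir_def sgn_div_norm divide_inverse_commute[symmetric])
qed

lemma norm_squared_has_real_derivative: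
  fixes f :: "real \<Rightarrow> 'a::real_inner"
  assumes "(f has_vector_derivative f') (at t within S)"
  shows "((\<lambda>s. (norm (f s))\<^sup>2) has_real_derivative 2 * inner (f t) f') (at t within S)"
  using has_derivative_inner[OF assms[unfolded has_vector_derivative_def] assms[unfolded has_vector_derivative_def]]
  unfolding has_field_derivative_def power2_norm_eq_inner
  by (rule has_derivative_eq_rhs) (simp add: fun_eq_iff inner_commute)

lemma total_energy_has_real_derivative:
  fixes x v :: "nat \<Rightarrow> real \<Rightarrow> 'a::euclidean_space" and a :: "nat \<Rightarrow> 'a"
  assumes xder: "\<And>i. i \<in> {1..N} \<Longrightarrow> (x i has_vector_derivative v i t) (at t within S)"
    and vder: "\<And>i. i \<in> {1..N} \<Longrightarrow> (v i has_vector_derivative a i) (at t within S)"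
    and noncoll: "\<And>i j. i \<in> {1..N} \<Longrightarrow> j \<in> {1..N} \<Longrightarrow> i \<noteq> j \<Longrightarrow> x i t \<noteq> x j t"
  shows "((\<lambda>s. total_energy N \<kappa>\<^sub>2 dinf (\<lambda>i. x i s) (\<lambda>i. v i s)) has_real_derivative
           (\<Sum>i\<in>{1..N}. inner (v i t) (a i))
         + (\<kappa>\<^sub>2 / (2 * real N)) * (\<Sum>i\<in>{1..N}. \<Sum>j\<in>{1..N}.
              (norm (x j t - x i t) - dinf i j) * inner (v j t - v i t) (unitdir (x i t) (x j t))))
         (at t within S)"
proof -
  let ?A = "{1..N}"
  have kinetic: "((\<lambda>s. \<Sum>i\<in>?A. (norm (v i s))\<^sup>2) has_real_derivative
      (\<Sum>i\<in>?A. 2 * inner (v i t) (a i))) (at t within S)"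
    by (intro DERIV_sum norm_squared_has_real_derivative vder)
  have bond: "((\<lambda>s. (norm (x j s - x i s) - dinf i j)\<^sup>2) has_real_derivative
      2 * ((norm (x j t - x i t) - dinf i j) * inner (v j t - v i t) (unitdir (x i t) (x j t))))
      (at t within S)" if "i \<in> ?A" "j \<in> ?A" for i j
  proof (cases "i = j")
    case False
    with that have "((\<lambda>s. norm (x j s - x i s)) has_real_derivative
        inner (v j t - v i t) (unitdir (x i t) (x j t))) (at t within S)"
      by (intro norm_diff_has_real_derivative xder noncoll)
    from DERIV_power[OF DERIV_diff[OF this DERIV_const[of "dinf i j"]], of 2]
    show ?thesis
      by (simp add: mult.commute)
  qed simp
  have potential: "((\<lambda>s. \<Sum>i\<in>?A. \<Sum>j\<in>?A. (norm (x j s - x i s) - dinf i j)\<^sup>2) has_real_derivative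
      (\<Sum>i\<in>?A. \<Sum>j\<in>?A. 2 * ((norm (x j t - x i t) - dinf i j) * inner (v j t - v i t) (unitdir (x i t) (x j t)))))
      (at t within S)"
    by (intro DERIV_sum bond)
  have "(\<Sum>i\<in>?A. \<Sum>j\<in>?A. 2 * ((norm (x j t - x i t) - dinf i j) * inner (v j t - v i t) (unitdir (x i t) (x j t))))
      = 2 * (\<Sum>i\<in>?A. \<Sum>j\<in>?A. (norm (x j t - x i t) - dinf i j) * inner (v j t - v i t) (unitdir (x i t) (x j t)))"
    by (simp only: sum_distrib_left)
  moreover have "(\<Sum>i\<in>?A. 2 * inner (v i t) (a i)) = 2 * (\<Sum>i\<in>?A. inner (v i t) (a i))"
    by (simp only: sum_distrib_left)
  ultimately show ?thesis
    using DERIV_add[OF DERIV_cmult[OF kinetic, of "1/2"] DERIV_cmult[OF potential, of "\<kappa>\<^sub>2 / (4 * real N)"]]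
    unfolding total_energy_def by simp
qed

lemma total_energy_has_derivative_dissipation:
  fixes x v :: "nat \<Rightarrow> real \<Rightarrow> 'a::euclidean_space"
  assumes dsym: "\<forall>i\<in>{1..N}. \<forall>j\<in>{1..N}. dinf i j = dinf j i"
    and xder: "\<And>i. i \<in> {1..N} \<Longrightarrow> (x i has_vector_derivative v i t) (at t within S)"
    and vder: "\<And>i. i \<in> {1..N} \<Longrightarrow>
      (v i has_vector_derivative cs_rhs N \<kappa>\<^sub>0 \<kappa>\<^sub>1 \<kappa>\<^sub>2 \<psi> dinf (\<lambda>j. x j t) (\<lambda>j. v j t) i) (at t within S)"
    and noncoll: "\<And>i j. i \<in> {1..N} \<Longrightarrow> j \<in> {1..N} \<Longrightarrow> i \<noteq> j \<Longrightarrow> x i t \<noteq> x j t"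
  shows "((\<lambda>s. total_energy N \<kappa>\<^sub>2 dinf (\<lambda>i. x i s) (\<lambda>i. v i s)) has_real_derivative
           - dissipation N \<kappa>\<^sub>0 \<kappa>\<^sub>1 \<psi> (\<lambda>i. x i t) (\<lambda>i. v i t)) (at t within S)"
  using total_energy_has_real_derivative[where N = N and x = x and v = v and \<kappa>\<^sub>2 = \<kappa>\<^sub>2 and dinf = dinf, OF xder vder noncoll]
proof (rule DERIV_cong)
  show "(\<Sum>i\<in>{1..N}. inner (v i t) (cs_rhs N \<kappa>\<^sub>0 \<kappa>\<^sub>1 \<kappa>\<^sub>2 \<psi> dinf (\<lambda>j. x j t) (\<lambda>j. v j t) i))
      + (\<kappa>\<^sub>2 / (2 * real N)) * (\<Sum>i\<in>{1..N}. \<Sum>j\<in>{1..N}.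
          (norm (x j t - x i t) - dinf i j) * inner (v j t - v i t) (unitdir (x i t) (x j t)))
      = - dissipation N \<kappa>\<^sub>0 \<kappa>\<^sub>1 \<psi> (\<lambda>i. x i t) (\<lambda>i. v i t)"
    by (subst sum_inner_cs_rhs[OF dsym]) simp
qed

theorem proposition2p3:
  fixes N :: nat and k0 k1 k2 :: real and \<psi> :: "real \<Rightarrow> real"
    and dinf :: "nat \<Rightarrow> nat \<Rightarrow> real" and \<tau> :: ereal
    and x v :: "nat \<Rightarrow> real \<Rightarrow> 'a::euclidean_space"
  assumes N: "N \<ge> 2"
    and k: "k0 \<ge> 0" "k1 \<ge> 0" "k2 \<ge> 0"
    and dsym: "\<forall>i\<in>{1..N}. \<forall>j\<in>{1..N}. dinf i j = dinf j i"
    and ddiag: "\<forall>i\<in>{1..N}. dinf i i = 0"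
    and psi_nonneg: "\<forall>s\<ge>0. \<psi> s \<ge> 0"
    and psi_bdd: "bounded (\<psi> ` {0..})"
    and psi_lip: "locally_lipschitz_nonneg \<psi>"
    and tau: "\<tau> > 0"
    and xcont: "\<forall>i\<in>{1..N}. continuous_on {t. 0 \<le> t \<and> ereal t < \<tau>} (v i)"
    and vcont: "\<forall>i\<in>{1..N}. continuous_on {t. 0 \<le> t \<and> ereal t < \<tau>}
                  (\<lambda>t. cs_rhs N k0 k1 k2 \<psi> dinf (\<lambda>j. x j t) (\<lambda>j. v j t) i)"
    and xder: "\<forall>i\<in>{1..N}. \<forall>t. 0 \<le> t \<and> ereal t < \<tau> \<longrightarrow>
                 (x i has_vector_derivative v i t) (at t within {t. 0 \<le> t \<and> ereal t < \<tau>})"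
    and vder: "\<forall>i\<in>{1..N}. \<forall>t. 0 \<le> t \<and> ereal t < \<tau> \<longrightarrow>
                 (v i has_vector_derivative cs_rhs N k0 k1 k2 \<psi> dinf (\<lambda>j. x j t) (\<lambda>j. v j t) i)
                   (at t within {t. 0 \<le> t \<and> ereal t < \<tau>})"
    and noncoll: "\<forall>t. 0 \<le> t \<and> ereal t < \<tau> \<longrightarrow>
                 (\<forall>i\<in>{1..N}. \<forall>j\<in>{1..N}. i \<noteq> j \<longrightarrow> x i t \<noteq> x j t)"
  shows "\<forall>t. 0 \<le> t \<and> ereal t < \<tau> \<longrightarrow>
           total_energy N k2 dinf (\<lambda>i. x i t) (\<lambda>i. v i t)
           + integral {0..t} (\<lambda>s. dissipation N k0 k1 \<psi> (\<lambda>i. x i s) (\<lambda>i. v i s))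
           = total_energy N k2 dinf (\<lambda>i. x i 0) (\<lambda>i. v i 0)"
proof (intro allI impI)
  let ?S = "{t. 0 \<le> t \<and> ereal t < \<tau>}"
  define E where "E s = total_energy N k2 dinf (\<lambda>i. x i s) (\<lambda>i. v i s)" for s
  define P where "P s = dissipation N k0 k1 \<psi> (\<lambda>i. x i s) (\<lambda>i. v i s)" for s
  fix t assume "0 \<le> t \<and> ereal t < \<tau>"
  then have interval: "{0..t} \<subseteq> ?S"
    by (auto intro: le_less_trans[where y = "ereal t"])
  have E_deriv: "(E has_vector_derivative - P s) (at s within {0..t})" if "s \<in> {0..t}" for s
  proof -
    from that interval have "s \<in> ?S" by blast
    with dsym xder vder noncoll have "(E has_real_derivative - P s) (at s within ?S)"
      unfolding E_def[abs_def] P_def by (intro total_energy_has_derivative_dissipation) auto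
    with interval show ?thesis
      by (simp add: DERIV_subset has_real_derivative_iff_has_vector_derivative[symmetric])
  qed
  have "((\<lambda>s. - P s) has_integral E t - E 0) {0..t}"
    using \<open>0 \<le> t \<and> ereal t < \<tau>\<close> E_deriv by (intro fundamental_theorem_of_calculus) auto
  from has_integral_neg[OF this] have "(P has_integral E 0 - E t) {0..t}"
    by simp
  then have "integral {0..t} P = E 0 - E t"
    by (rule integral_unique)
  then show "E t + integral {0..t} P = E 0"
    by simp
qed

end
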